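(* Let $X$ be a discretely geodesic metric space with $\beta$-stable intervals. For all $x,y,z\in X$ there exists a point $v\in I(x,y)$ with $d(z,v)\le\beta\cdot 2(x\mid y)_z$.
   Context: $(x\mid y)_z=\frac12(d(z,x)+d(z,y)-d(x,y))$. $X$ is discretely geodesic if $d$ is integer valued and any $x,y$ are joined by an isometric embedding $\gamma\colon\{0,\dots,d(x,y)\}\to X$ with $\gamma(0)=x,\gamma(d(x,y))=y$. $I(x,y)=\{u: d(x,u)+d(u,y)=d(x,y)\}$. $\beta$-stable intervals: for all $x,y,y'$ with $d(y,y')=1$, the Hausdorff distance between $I(x,y)$ and $I(x,y')$ is at most $\beta$. *)

theory Defs
  imports "HOL-Analysis.Analysis" "HOL-Library.Extended_Real"
begin

definition gromov_product :: "('a \<Rightarrow> 'a \<Rightarrow> real) \<Rightarrow> 'a \<Rightarrow> 'a \<Rightarrow> 'a \<Rightarrow> real" where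
  "gromov_product d x y z = (d z x + d z y - d x y) / 2"

definition discretely_geodesic :: "'a set \<Rightarrow> ('a \<Rightarrow> 'a \<Rightarrow> real) \<Rightarrow> bool" where
  "discretely_geodesic X d \<longleftrightarrow>
     (\<forall>x\<in>X. \<forall>y\<in>X. d x y \<in> \<int>) \<and>
     (\<forall>x\<in>X. \<forall>y\<in>X. \<exists>\<gamma> :: nat \<Rightarrow> 'a.
        (\<forall>i \<le> nat \<lfloor>d x y\<rfloor>. \<gamma> i \<in> X) \<and> \<gamma> 0 = x \<and> \<gamma> (nat \<lfloor>d x y\<rfloor>) = y \<and>
        (\<forall>i \<le> nat \<lfloor>d x y\<rfloor>. \<forall>j \<le> nat \<lfloor>d x y\<rfloor>. d (\<gamma> i) (\<gamma> j) = \<bar>real i - real j\<bar>))"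

definition interval :: "'a set \<Rightarrow> ('a \<Rightarrow> 'a \<Rightarrow> real) \<Rightarrow> 'a \<Rightarrow> 'a \<Rightarrow> 'a set" where
  "interval X d x y = {u \<in> X. d x u + d u y = d x y}"

definition hausdorff_distance :: "('a \<Rightarrow> 'a \<Rightarrow> real) \<Rightarrow> 'a set \<Rightarrow> 'a set \<Rightarrow> ereal" where
  "hausdorff_distance d A B =
     max (SUP a\<in>A. INF b\<in>B. ereal (d a b)) (SUP b\<in>B. INF a\<in>A. ereal (d b a))"

definition stable_intervals :: "'a set \<Rightarrow> ('a \<Rightarrow> 'a \<Rightarrow> real) \<Rightarrow> real \<Rightarrow> bool" where
  "stable_intervals X d \<beta> \<longleftrightarrow>
     (\<forall>x\<in>X. \<forall>y\<in>X. \<forall>y'\<in>X. d y y' = 1 \<longrightarrow>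
        hausdorff_distance d (interval X d x y) (interval X d x y') \<le> ereal \<beta>)"

end

theory Submission
  imports Defs
begin

text \<open>
  Induct on d(z,y). If z = y take v = z. Otherwise a discrete geodesic from y to z supplies a
  neighbour y' of y one step closer to z, and by induction some v' \<in> I(x,y') lies within
  2\<beta>(x|y')_z of z. If y' \<in> I(x,y), then I(x,y') \<subseteq> I(x,y) and (x|y')_z = (x|y)_z, so v'
  already works. Otherwise integrality of distances forces d(x,y') \<ge> d(x,y), so
  2(x|y')_z \<le> 2(x|y)_z - 1, and stability of intervals moves v' into I(x,y) at cost \<beta>.
\<close>

lemma two_gromov_product: "2 * gromov_product d x y z = d z x + d z y - d x y"
  by (simp add: gromov_product_def)

lemma hausdorff_distance_le_attained:
  assumes "hausdorff_distance d A B \<le> ereal r" and "a \<in> A" and "B \<noteq> {}"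
    and "\<And>b. b \<in> B \<Longrightarrow> d a b \<in> \<nat>"
  shows "\<exists>b\<in>B. d a b \<le> r"
proof -
  define f where "f b = nat \<lfloor>d a b\<rfloor>" for b
  have d_eq_f: "d a b = real (f b)" if "b \<in> B" for b
    using assms(4)[OF that] by (auto elim: Nats_cases simp: f_def)
  obtain b0 where b0: "b0 \<in> B" and least: "\<And>b. b \<in> B \<Longrightarrow> f b0 \<le> f b"
    using ex_has_least_nat[of "\<lambda>b. b \<in> B" _ f] assms(3) by blast
  have "ereal (d a b0) \<le> (INF b\<in>B. ereal (d a b))"
    by (rule INF_greatest) (simp add: b0 d_eq_f least)
  also have "\<dots> \<le> (SUP a\<in>A. INF b\<in>B. ereal (d a b))"
    using assms(2) by (rule SUP_upper)
  also have "\<dots> \<le> ereal r"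
    using assms(1) unfolding hausdorff_distance_def by simp
  finally show ?thesis
    using b0 by auto
qed

context Metric_space
begin

lemma left_mem_interval: "x \<in> M \<Longrightarrow> y \<in> M \<Longrightarrow> x \<in> interval M d x y"
  by (simp add: interval_def)

lemma interval_subset_interval:
  assumes "x \<in> M" and "y \<in> M" and "y' \<in> interval M d x y"
  shows "interval M d x y' \<subseteq> interval M d x y"
proof
  fix v
  assume "v \<in> interval M d x y'"
  then have v: "v \<in> M" "d x v + d v y' = d x y'"
    by (simp_all add: interval_def)
  have y': "y' \<in> M" "d x y' + d y' y = d x y"
    using assms(3) by (simp_all add: interval_def)
  have "d v y \<le> d v y' + d y' y" "d x y \<le> d x v + d v y"
    using triangle assms v y' by blast+
  with v y' show "v \<in> interval M d x y"
    by (simp add: interval_def)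
qed

end

locale discretely_geodesic_space = Metric_space +
  assumes discretely_geodesic: "discretely_geodesic M d"
begin

lemma dist_in_Nats: "x \<in> M \<Longrightarrow> y \<in> M \<Longrightarrow> d x y \<in> \<nat>"
  using discretely_geodesic by (simp add: discretely_geodesic_def Nats_altdef2)

lemma exists_step_towards:
  assumes "y \<in> M" and "z \<in> M" and "y \<noteq> z"
  shows "\<exists>y'\<in>M. d y y' = 1 \<and> d y' z = d y z - 1"
proof -
  obtain n where n: "d y z = real n"
    using dist_in_Nats[OF assms(1,2)] by (auto elim: Nats_cases)
  moreover have "n \<noteq> 0"
    using n assms zero[of y z] by auto
  ultimately have "nat \<lfloor>d y z\<rfloor> = n" "1 \<le> n"
    by auto
  then obtain \<gamma> where \<gamma>: "\<forall>i \<le> n. \<gamma> i \<in> M" "\<gamma> 0 = y" "\<gamma> n = z"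
      "\<forall>i \<le> n. \<forall>j \<le> n. d (\<gamma> i) (\<gamma> j) = \<bar>real i - real j\<bar>"
    using discretely_geodesic assms(1,2) unfolding discretely_geodesic_def by metis
  have "d (\<gamma> 0) (\<gamma> 1) = 1" "d (\<gamma> 1) (\<gamma> n) = real n - 1"
    using \<gamma>(4) \<open>1 \<le> n\<close> by auto
  then show ?thesis
    using \<gamma>(1-3) \<open>1 \<le> n\<close> n by (intro bexI[of _ "\<gamma> 1"]) auto
qed

lemma dist_unit_step_cases:
  assumes "x \<in> M" and "y \<in> M" and "y' \<in> M" and "d y y' = 1"
  shows "d x y' = d x y - 1 \<or> d x y \<le> d x y'"
proof -
  obtain m n where "d x y' = real m" "d x y = real n"
    using dist_in_Nats assms(1-3) by (metis Nats_cases)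
  moreover have "d x y \<le> d x y' + d y' y"
    using triangle assms(1-3) by blast
  ultimately have "real n \<le> real (m + 1)"
    using assms(4) commute[of y y'] by simp
  then have "n = m + 1 \<or> n \<le> m"
    by linarith
  with \<open>d x y' = real m\<close> \<open>d x y = real n\<close> show ?thesis
    by auto
qed

lemma stable_intervals_near_point:
  assumes "stable_intervals M d \<beta>" and "x \<in> M" and "y \<in> M" and "y' \<in> M"
    and "d y y' = 1" and "v' \<in> interval M d x y'"
  shows "\<exists>v\<in>interval M d x y. d v' v \<le> \<beta>"
proof (rule hausdorff_distance_le_attained)
  have "d y' y = 1"
    using assms(5) commute[of y y'] by simp
  then show "hausdorff_distance d (interval M d x y') (interval M d x y) \<le> ereal \<beta>"
    using assms(1-4) unfolding stable_intervals_def by blast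
  show "interval M d x y \<noteq> {}"
    using left_mem_interval assms(2,3) by blast
  show "d v' v \<in> \<nat>" if "v \<in> interval M d x y" for v
    using that assms(6) dist_in_Nats by (simp add: interval_def)
qed (fact assms(6))

lemma exists_interval_point_near:
  assumes "stable_intervals M d \<beta>" and "x \<in> M" and "y \<in> M" and "z \<in> M"
    and "d z y = real n"
  shows "\<exists>v\<in>interval M d x y. d z v \<le> \<beta> * (2 * gromov_product d x y z)"
  using assms(3,5)
proof (induction n arbitrary: y)
  case 0
  then have "z = y"
    using assms(4) by simp
  with 0 show ?case
    using assms(2) commute[of x y]
    by (intro bexI[of _ z]) (auto simp: interval_def gromov_product_def)
next
  case (Suc n)
  then obtain y' where y': "y' \<in> M" "d y y' = 1" "d y' z = d y z - 1"
    using exists_step_towards[of y z] assms(4) by fastforce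
  then have "d z y' = real n"
    using Suc.prems(2) commute[of z y] commute[of z y'] by simp
  then obtain v' where v': "v' \<in> interval M d x y'"
      "d z v' \<le> \<beta> * (2 * gromov_product d x y' z)"
    using Suc.IH y'(1) by blast
  have dzy': "d z y' = d z y - 1"
    using y'(3) commute[of z y] commute[of z y'] by simp
  consider "d x y' = d x y - 1" | "d x y \<le> d x y'"
    using dist_unit_step_cases assms(2) Suc.prems(1) y'(1,2) by blast
  then show ?case
  proof cases
    case 1
    then have "y' \<in> interval M d x y"
      using y'(1,2) commute[of y y'] by (simp add: interval_def)
    then have "v' \<in> interval M d x y"
      using interval_subset_interval assms(2) Suc.prems(1) v'(1) by blast
    moreover have "gromov_product d x y' z = gromov_product d x y z"
      using 1 dzy' by (simp add: gromov_product_def)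
    ultimately show ?thesis
      using v'(2) by auto
  next
    case 2
    obtain v where v: "v \<in> interval M d x y" "d v' v \<le> \<beta>"
      using stable_intervals_near_point assms(1,2) Suc.prems(1) y'(1,2) v'(1) by blast
    have "v' \<in> M" "v \<in> M"
      using v'(1) v(1) by (simp_all add: interval_def)
    then have "d z v \<le> d z v' + d v' v"
      using triangle assms(4) by blast
    also have "\<dots> \<le> \<beta> * (d z x + d z y' - d x y') + \<beta>"
      using v'(2) v(2) unfolding two_gromov_product by linarith
    also have "\<dots> = \<beta> * (d z x + d z y' - d x y' + 1)"
      by (simp add: algebra_simps)
    also have "\<dots> \<le> \<beta> * (d z x + d z y - d x y)"
      using 2 dzy' order_trans[OF nonneg v(2)] by (intro mult_left_mono) auto
    finally show ?thesis
      using v(1) unfolding two_gromov_product by blast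
  qed
qed

end

theorem lemma5p11:
  fixes X :: "'a set" and d :: "'a \<Rightarrow> 'a \<Rightarrow> real" and \<beta> :: real
  assumes "Metric_space X d"
    and "discretely_geodesic X d"
    and "stable_intervals X d \<beta>"
    and "x \<in> X" and "y \<in> X" and "z \<in> X"
  shows "\<exists>v\<in>interval X d x y. d z v \<le> \<beta> * (2 * gromov_product d x y z)"
proof -
  interpret discretely_geodesic_space X d
    by (intro discretely_geodesic_space.intro discretely_geodesic_space_axioms.intro assms(1,2))
  obtain n where "d z y = real n"
    using dist_in_Nats assms(5,6) by (metis Nats_cases)
  then show ?thesis
    using exists_interval_point_near assms(3-6) by blast
qed

end
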